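(* Let $H$ be a separable complex Hilbert space, $\{v_j\}_{j\in\mathbb N}$ an orthonormal basis of $H$, and $\{w_j\}_{j\in\mathbb N}$ a set of unit vectors in $H$. For $N\ge1$ define $T_Nf=(\langle f,w_1\rangle,\dots,\langle f,w_N\rangle,\langle f,v_{N+1}\rangle,\langle f,v_{N+2}\rangle,\dots)$ and $T_\infty f=(\langle f,w_n\rangle)_{n\in\mathbb N}$ for $f\in H$, and say $T_N\to T_\infty$ uniformly if $\sup_{\|f\|=1}\|T_Nf-T_\infty f\|_{\ell^2}\to0$ as $N\to\infty$. (a) If $T_N\to T_\infty$ uniformly, then $\lim_{N\to\infty}\|v_N-w_N\|=0$. (b) If $\{\|v_n-w_n\|\}_{n\in\mathbb N}\in\ell^2$, then $T_N\to T_\infty$ uniformly. *)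

theory Defs
  imports "HOL-Analysis.Analysis"
begin

text \<open>The inner product is linear in the
  first argument and conjugate-linear in the second.\<close>

class complex_vector = real_vector +
  fixes scaleC :: "complex \<Rightarrow> 'a \<Rightarrow> 'a"  (infixr \<open>*\<^sub>C\<close> 75)
  assumes scaleC_add_right: "scaleC a (x + y) = scaleC a x + scaleC a y"
    and scaleC_add_left: "scaleC (a + b) x = scaleC a x + scaleC b x"
    and scaleC_scaleC: "scaleC a (scaleC b x) = scaleC (a * b) x"
    and scaleC_one: "scaleC 1 x = x"
    and scaleR_scaleC: "scaleR r x = scaleC (complex_of_real r) x"

class complex_inner = complex_vector + real_normed_vector +
  fixes cinner :: "'a \<Rightarrow> 'a \<Rightarrow> complex"
  assumes cinner_conj_commute: "cinner x y = cnj (cinner y x)"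
    and cinner_add_left: "cinner (x + y) z = cinner x z + cinner y z"
    and cinner_scaleC_left: "cinner (scaleC r x) y = r * cinner x y"
    and cinner_self_norm: "cinner x x = complex_of_real ((norm x)\<^sup>2)"

class chilbert_space = complex_inner + complete_space

definition separable_space :: "'a::topological_space itself \<Rightarrow> bool" where
  "separable_space _ \<longleftrightarrow> (\<exists>D::'a set. countable D \<and> closure D = UNIV)"

definition cspan :: "'a::complex_vector set \<Rightarrow> 'a set" where
  "cspan S = {x. \<exists>F c. finite F \<and> F \<subseteq> S \<and> x = (\<Sum>u\<in>F. c u *\<^sub>C u)}"

definition orthonormal_basis :: "(nat \<Rightarrow> 'a::complex_inner) \<Rightarrow> bool" where
  "orthonormal_basis v \<longleftrightarrow>
     (\<forall>i j. cinner (v i) (v j) = (if i = j then 1 else 0)) \<and>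
     closure (cspan (range v)) = UNIV"

text \<open>The frame operators: T N f has entries <f,w_n> for n < N and <f,v_n> for n >= N
  (indices start at 0), and T_infty f = (<f,w_n>)_n.\<close>
definition T_N :: "(nat \<Rightarrow> 'a::complex_inner) \<Rightarrow> (nat \<Rightarrow> 'a) \<Rightarrow> nat \<Rightarrow> 'a \<Rightarrow> nat \<Rightarrow> complex" where
  "T_N v w N f = (\<lambda>n. if n < N then cinner f (w n) else cinner f (v n))"

definition T_inf :: "(nat \<Rightarrow> 'a::complex_inner) \<Rightarrow> 'a \<Rightarrow> nat \<Rightarrow> complex" where
  "T_inf w f = (\<lambda>n. cinner f (w n))"

definition l2norm :: "(nat \<Rightarrow> complex) \<Rightarrow> ennreal" where
  "l2norm x = (if summable (\<lambda>n. (cmod (x n))\<^sup>2)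
               then ennreal (sqrt (\<Sum>n. (cmod (x n))\<^sup>2)) else \<infinity>)"

definition T_unif_conv :: "(nat \<Rightarrow> 'a::complex_inner) \<Rightarrow> (nat \<Rightarrow> 'a) \<Rightarrow> bool" where
  "T_unif_conv v w \<longleftrightarrow>
     ((\<lambda>N. SUP f\<in>{f::'a. norm f = 1}. l2norm (\<lambda>n. T_N v w N f n - T_inf w f n)) \<longlongrightarrow> 0)
       sequentially"

end

theory Submission imports Defs begin

text \<open>The difference T_N f - T_infty f vanishes on the first N entries and equals
  <f, v_n - w_n> afterwards.  By Cauchy-Schwarz its squared l^2 norm over unit vectors f is
  at most the tail sum of the ||v_n - w_n||^2, which gives (b); testing with
  f = (v_N - w_N)/||v_N - w_N|| and looking at entry N gives ||v_N - w_N|| as a lower bound,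
  which gives (a).\<close>

lemma cinner_zero_left: "cinner 0 y = 0"
  using cinner_add_left[of 0 0 y] by simp

lemma cinner_minus_left: "cinner (- x) y = - cinner x y"
  using cinner_add_left[of x "- x" y] by (simp add: cinner_zero_left eq_neg_iff_add_eq_0 add.commute)

lemma cinner_diff_left: "cinner (x - y) z = cinner x z - cinner y z"
  using cinner_add_left[of x "- y" z] by (simp add: cinner_minus_left)

lemma cinner_diff_right: "cinner x (y - z) = cinner x y - cinner x z"
  by (metis cinner_diff_left cinner_conj_commute complex_cnj_diff)

lemma cinner_zero_right: "cinner x 0 = 0"
  by (metis cinner_zero_left cinner_conj_commute complex_cnj_zero)

lemma cinner_scaleC_right: "cinner x (r *\<^sub>C y) = cnj r * cinner x y"
  by (metis cinner_conj_commute cinner_scaleC_left complex_cnj_mult)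

lemma complex_inner_Cauchy_Schwarz: "cmod (cinner x y) \<le> norm x * norm y"
proof (cases "y = 0")
  case True
  then show ?thesis by (simp add: cinner_zero_right)
next
  case False
  define a where "a = cinner x y"
  define n where "n = (norm y)\<^sup>2"
  have n_pos: "n > 0" using False by (simp add: n_def)
  define t where "t = a / complex_of_real n"
  have yx: "cinner y x = cnj a" by (metis a_def cinner_conj_commute)
  \<comment> \<open>project x onto the line spanned by y\<close>
  have "complex_of_real ((norm (x - t *\<^sub>C y))\<^sup>2) = cinner (x - t *\<^sub>C y) (x - t *\<^sub>C y)"
    by (simp add: cinner_self_norm)
  also have "\<dots> = cinner x x - cnj t * a - t * cnj a + t * cnj t * cinner y y"
    unfolding cinner_diff_left cinner_diff_right cinner_scaleC_left cinner_scaleC_right yx a_def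
    by (simp add: algebra_simps)
  also have "\<dots> = complex_of_real ((norm x)\<^sup>2 - (cmod a)\<^sup>2 / n)"
    using n_pos unfolding t_def cinner_self_norm n_def[symmetric]
    by (simp add: field_simps complex_norm_square[symmetric] power2_eq_square)
  finally have "(cmod a)\<^sup>2 / n \<le> (norm x)\<^sup>2"
    by (metis of_real_eq_iff diff_ge_0_iff_ge zero_le_power2)
  then have "(cmod a)\<^sup>2 \<le> (norm x * norm y)\<^sup>2"
    using n_pos by (simp add: n_def field_simps)
  then show ?thesis
    unfolding a_def by (meson norm_ge_zero power2_le_imp_le zero_le_mult_iff)
qed

lemma l2norm_ge_norm_nth: "ennreal (cmod (x k)) \<le> l2norm x"
proof (cases "summable (\<lambda>n. (cmod (x n))\<^sup>2)")
  case True
  have "(\<Sum>n\<in>{k}. (cmod (x n))\<^sup>2) \<le> (\<Sum>n. (cmod (x n))\<^sup>2)"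
    by (rule sum_le_suminf[OF True]) auto
  then have "cmod (x k) \<le> sqrt (\<Sum>n. (cmod (x n))\<^sup>2)"
    using real_le_rsqrt by simp
  then show ?thesis using True by (simp add: l2norm_def ennreal_leI)
qed (simp add: l2norm_def)

lemma l2norm_le_sqrt_suminf:
  assumes "summable b" and "\<And>n. (cmod (x n))\<^sup>2 \<le> b n"
  shows "l2norm x \<le> ennreal (sqrt (\<Sum>n. b n))"
proof -
  have summable_x: "summable (\<lambda>n. (cmod (x n))\<^sup>2)"
    by (rule summable_comparison_test'[OF assms(1), of 0]) (use assms(2) in auto)
  have "(\<Sum>n. (cmod (x n))\<^sup>2) \<le> (\<Sum>n. b n)"
    by (rule suminf_le[OF assms(2) summable_x assms(1)])
  then show ?thesis using summable_x by (simp add: l2norm_def ennreal_leI)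
qed

lemma T_N_minus_T_inf:
  "(\<lambda>n. T_N v w N f n - T_inf w f n) = (\<lambda>n. if n < N then 0 else cinner f (v n - w n))"
  by (auto simp: T_N_def T_inf_def cinner_diff_right)

lemma norm_diff_le_SUP_T_N_minus_T_inf:
  fixes v w :: "nat \<Rightarrow> 'a::complex_inner"
  shows "ennreal (norm (v N - w N))
    \<le> (SUP f\<in>{f. norm f = 1}. l2norm (\<lambda>n. T_N v w N f n - T_inf w f n))"
proof (cases "v N = w N")
  case False
  define d where "d = v N - w N"
  define f where "f = (1 / norm d) *\<^sub>R d"
  have norm_f: "norm f = 1" using False by (simp add: f_def d_def)
  have "cinner f d = complex_of_real (norm d)"
    unfolding f_def scaleR_scaleC cinner_scaleC_left cinner_self_norm
    using False by (simp add: d_def power2_eq_square)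
  then have "ennreal (norm d) \<le> l2norm (\<lambda>n. T_N v w N f n - T_inf w f n)"
    unfolding T_N_minus_T_inf
    using l2norm_ge_norm_nth[of "\<lambda>n. if n < N then 0 else cinner f (v n - w n)" N]
    by (simp add: d_def)
  also have "\<dots> \<le> (SUP f\<in>{f. norm f = 1}. l2norm (\<lambda>n. T_N v w N f n - T_inf w f n))"
    using norm_f by (intro SUP_upper) simp
  finally show ?thesis by (simp add: d_def)
qed simp

lemma l2norm_T_N_minus_T_inf_le_tail:
  fixes v w :: "nat \<Rightarrow> 'a::complex_inner"
  assumes summable: "summable (\<lambda>n. (norm (v n - w n))\<^sup>2)" and norm_f: "norm f = 1"
  shows "l2norm (\<lambda>n. T_N v w N f n - T_inf w f n)
    \<le> ennreal (sqrt (\<Sum>n. (norm (v (n + N) - w (n + N)))\<^sup>2))"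
proof -
  define b where "b n = (if n < N then 0 else (norm (v n - w n))\<^sup>2)" for n
  have summable_b: "summable b"
    by (rule summable_comparison_test'[OF summable, of 0]) (auto simp: b_def)
  have "(cmod (if n < N then 0 else cinner f (v n - w n)))\<^sup>2 \<le> b n" for n
    using complex_inner_Cauchy_Schwarz[of f "v n - w n"] norm_f
    by (simp add: b_def power_mono)
  then have "l2norm (\<lambda>n. T_N v w N f n - T_inf w f n) \<le> ennreal (sqrt (\<Sum>n. b n))"
    unfolding T_N_minus_T_inf by (rule l2norm_le_sqrt_suminf[OF summable_b])
  also have "(\<Sum>n. b n) = (\<Sum>n. (norm (v (n + N) - w (n + N)))\<^sup>2)"
    using suminf_split_initial_segment[OF summable_b, of N] by (simp add: b_def[abs_def])
  finally show ?thesis .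
qed

lemma tendsto_norm_diff_if_T_unif_conv:
  fixes v w :: "nat \<Rightarrow> 'a::complex_inner"
  assumes "T_unif_conv v w"
  shows "(\<lambda>N. norm (v N - w N)) \<longlonglongrightarrow> 0"
proof -
  have "(\<lambda>N. ennreal (norm (v N - w N))) \<longlonglongrightarrow> 0"
    using assms unfolding T_unif_conv_def
    by (rule tendsto_sandwich[OF _ _ tendsto_const, rotated 2])
       (auto intro!: always_eventually norm_diff_le_SUP_T_N_minus_T_inf)
  then have "(\<lambda>N. ennreal (norm (v N - w N))) \<longlonglongrightarrow> ennreal 0" by simp
  then show ?thesis by (subst (asm) tendsto_ennreal_iff) auto
qed

lemma T_unif_conv_if_summable:
  fixes v w :: "nat \<Rightarrow> 'a::complex_inner"
  assumes summable: "summable (\<lambda>n. (norm (v n - w n))\<^sup>2)"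
  shows "T_unif_conv v w"
proof -
  have "(\<lambda>N. \<Sum>n. (norm (v (n + N) - w (n + N)))\<^sup>2) \<longlonglongrightarrow> 0"
    by (rule suminf_exist_split2[OF summable])
  then have "(\<lambda>N. ennreal (sqrt (\<Sum>n. (norm (v (n + N) - w (n + N)))\<^sup>2))) \<longlonglongrightarrow> ennreal (sqrt 0)"
    by (intro tendsto_ennrealI tendsto_real_sqrt)
  then have "(\<lambda>N. ennreal (sqrt (\<Sum>n. (norm (v (n + N) - w (n + N)))\<^sup>2))) \<longlonglongrightarrow> 0"
    by simp
  then show ?thesis
    unfolding T_unif_conv_def
    by (rule tendsto_sandwich[OF _ _ tendsto_const, rotated 2])
       (auto intro!: always_eventually SUP_least l2norm_T_N_minus_T_inf_le_tail[OF summable])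
qed

theorem mainTheorem7:
  fixes v w :: "nat \<Rightarrow> 'h::chilbert_space"
  assumes "separable_space TYPE('h)"
    and "orthonormal_basis v"
    and "\<And>j. norm (w j) = 1"
  shows "(T_unif_conv v w \<longrightarrow> (\<lambda>N. norm (v N - w N)) \<longlonglongrightarrow> 0)
       \<and> (summable (\<lambda>n. (norm (v n - w n))\<^sup>2) \<longrightarrow> T_unif_conv v w)"
  using tendsto_norm_diff_if_T_unif_conv T_unif_conv_if_summable by blast

end
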